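(* For every generalized Stirling permutation $u$ of degree $n$ and every planar tree $t$ of degree $n$: $\pi(u)\le_{PT}t$ if and only if $u\le_{Pw}\iota(t)$. That is, $\pi$ and $\iota$ form a Galois connection between the planar weak order on generalized Stirling permutations and the planar Tamari order on planar trees.
   Context: A planar tree has linearly ordered children at each node, each node being a leaf or having $\ge2$ children (internal node); degree = number of leaves minus one. A generalized Stirling permutation (GSP) is a planar tree together with a bijection $\kappa$ from its internal nodes to $\{1,\dots,N\}$ ($N$ = number of internal nodes) increasing from each internal node to its internal children; $\pi(u)$ is its underlying planar tree. Its word $\mathbf w(u)$: a leaf has empty word; a node $x$ with children $c_1,\dots,c_k$ has word $\mathbf w(c_1)\kappa(x)\mathbf w(c_2)\cdots\kappa(x)\mathbf w(c_k)$. For each planar tree $t$ there is exactly one GSP with underlying tree $t$ whose word is $213$-avoiding (no $i<j<k$ with $w_k>w_i>w_j$); it is denoted $\iota(t)$. Planar weak order: for packed words, $w^{-1}(a)=\{p:w_p=a\}$, $\mathrm{iInv}(w)=\{(a,b):a<b,\ \min w^{-1}(a)>\max w^{-1}(b)\}$, $T_a(w)$ = $w$ with letters $a,a+1$ swapped; the order is the reflexive–transitive closure of: $u$ is covered by $w$ iff $u=T_a(w)$ and $|\mathrm{iInv}(w)|=|\mathrm{iInv}(u)|+1$. On GSPs, $u\le_{Pw}v$ iff $\mathbf w(u)\le\mathbf w(v)$. Planar Tamari order: if an internal node $x$ has children $c_1,\dots,c_{a-1},y$ ($a\ge2$) with $y$ internal having children $d_1,\dots,d_{b+1}$ ($b\ge1$),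 the left rotation at $x$ replaces the subtree at $x$ by a node with children $z,d_2,\dots,d_{b+1}$, where $z$ is a new node with children $c_1,\dots,c_{a-1},d_1$. $\le_{PT}$ is the reflexive–transitive closure of "$t$ is a left rotation of $s$". *)

theory Defs
  imports Main
begin

datatype ptree = Leaf | Node "ptree list"

fun wf_ptree :: "ptree \<Rightarrow> bool" where
  "wf_ptree Leaf = True"
| "wf_ptree (Node cs) = (2 \<le> length cs \<and> (\<forall>c\<in>set cs. wf_ptree c))"

fun leaves :: "ptree \<Rightarrow> nat" where
  "leaves Leaf = 1"
| "leaves (Node cs) = sum_list (map leaves cs)"

definition pdeg :: "ptree \<Rightarrow> nat" where
  "pdeg t = leaves t - 1"

section \<open>Generalized Stirling permutations (internal nodes labelled by kappa)\<close>

datatype ltree = LLeaf | LNode nat "ltree list"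

fun strip :: "ltree \<Rightarrow> ptree" where
  "strip LLeaf = Leaf"
| "strip (LNode k cs) = Node (map strip cs)"

fun labels :: "ltree \<Rightarrow> nat list" where
  "labels LLeaf = []"
| "labels (LNode k cs) = k # concat (map labels cs)"

fun lbl_incr :: "ltree \<Rightarrow> bool" where
  "lbl_incr LLeaf = True"
| "lbl_incr (LNode k cs) =
     (\<forall>c\<in>set cs. lbl_incr c \<and> (\<forall>k' ds. c = LNode k' ds \<longrightarrow> k < k'))"

definition gsp :: "ltree \<Rightarrow> bool" where
  "gsp u \<longleftrightarrow> wf_ptree (strip u) \<and> distinct (labels u)
      \<and> set (labels u) = {1..length (labels u)} \<and> lbl_incr u"

abbreviation \<pi> :: "ltree \<Rightarrow> ptree" where
  "\<pi> u \<equiv> strip u"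

fun word :: "ltree \<Rightarrow> nat list" where
  "word LLeaf = []"
| "word (LNode k []) = []"
| "word (LNode k (c # cs)) = word c @ concat (map (\<lambda>d. k # word d) cs)"

definition avoids213 :: "nat list \<Rightarrow> bool" where
  "avoids213 w \<longleftrightarrow> \<not> (\<exists>i j k. i < j \<and> j < k \<and> k < length w \<and> w!j < w!i \<and> w!i < w!k)"

definition \<iota> :: "ptree \<Rightarrow> ltree" where
  "\<iota> t = (THE u. gsp u \<and> strip u = t \<and> avoids213 (word u))"

definition packed :: "nat list \<Rightarrow> bool" where
  "packed w \<longleftrightarrow> set w = {1..Max (insert 0 (set w))}"

definition positions :: "nat list \<Rightarrow> nat \<Rightarrow> nat set" where
  "positions w a = {p. p < length w \<and> w ! p = a}"

definition iInv :: "nat list \<Rightarrow> (nat \<times> nat) set" where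
  "iInv w = {(a, b). a < b \<and> a \<in> set w \<and> b \<in> set w
              \<and> Min (positions w a) > Max (positions w b)}"

definition swapT :: "nat \<Rightarrow> nat list \<Rightarrow> nat list" where
  "swapT a w = map (\<lambda>x. if x = a then a + 1 else if x = a + 1 then a else x) w"

definition pw_cover :: "nat list \<Rightarrow> nat list \<Rightarrow> bool" where
  "pw_cover u w \<longleftrightarrow> packed u \<and> packed w \<and>
     (\<exists>a. u = swapT a w \<and> card (iInv w) = card (iInv u) + 1)"

definition pw_le :: "nat list \<Rightarrow> nat list \<Rightarrow> bool" where
  "pw_le = pw_cover\<^sup>*\<^sup>*"

definition gsp_le :: "ltree \<Rightarrow> ltree \<Rightarrow> bool" where
  "gsp_le u v \<longleftrightarrow> pw_le (word u) (word v)"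

inductive lrot :: "ptree \<Rightarrow> ptree \<Rightarrow> bool" where
  root: "cs \<noteq> [] \<Longrightarrow> ds \<noteq> [] \<Longrightarrow>
         lrot (Node (cs @ [Node (d1 # ds)])) (Node (Node (cs @ [d1]) # ds))"
| sub: "lrot s t \<Longrightarrow> lrot (Node (xs @ s # ys)) (Node (xs @ t # ys))"

definition pt_le :: "ptree \<Rightarrow> ptree \<Rightarrow> bool" where
  "pt_le = lrot\<^sup>*\<^sup>*"

end

theory Submission
  imports Defs
begin

text \<open>The Galois connection follows from four facts, all proved on words of GSPs:
  \<open>\<pi>\<close> and \<open>\<iota>\<close> are monotone, \<open>\<pi> (\<iota> t) = t\<close>, and \<open>u \<le> \<iota> (\<pi> u)\<close>.

  A cover of the planar weak order swaps letters \<open>a\<close> and \<open>a + 1\<close> of a word in which every \<open>a\<close>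
  precedes every \<open>a + 1\<close>. Decoding, this either only relabels the tree or performs one left
  rotation, so \<open>\<pi>\<close> is monotone. The 213-avoiding GSP \<open>\<iota> t\<close> labels the internal nodes in preorder,
  children from right to left; a left rotation of \<open>t\<close> moves one label of \<open>\<iota> t\<close> across the
  consecutive labels of a subtree, which is a chain of such covers, so \<open>\<iota>\<close> is monotone. Finally, if
  the word of \<open>u\<close> contains a 213-pattern then, being packed and of Stirling type, it contains one of
  the form \<open>a \<dots> e \<dots> (a + 1)\<close> in which \<open>e\<close> separates all occurrences of \<open>a\<close> from those of
  \<open>a + 1\<close>; swapping \<open>a\<close> and \<open>a + 1\<close> is a cover that keeps the tree, and iterating ends at the
  unique 213-avoiding GSP \<open>\<iota> (\<pi> u)\<close>.\<close>


section \<open>Cutting a word at the occurrences of a letter\<close>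

fun split_on :: "nat \<Rightarrow> nat list \<Rightarrow> nat list list" where
  "split_on m [] = [[]]"
| "split_on m (x # xs) =
     (if x = m then [] # split_on m xs
      else (x # hd (split_on m xs)) # tl (split_on m xs))"

fun join_on :: "nat \<Rightarrow> nat list list \<Rightarrow> nat list" where
  "join_on m [] = []"
| "join_on m (P # Ps) = P @ concat (map (\<lambda>Q. m # Q) Ps)"

lemma split_on_not_Nil [simp]: "split_on m xs \<noteq> []"
  by (induction xs) auto

lemma split_on_notin: "m \<notin> set xs \<Longrightarrow> split_on m xs = [xs]"
  by (induction xs) auto

lemma split_on_append:
  "split_on m (xs @ ys) =
     butlast (split_on m xs) @ (last (split_on m xs) @ hd (split_on m ys)) # tl (split_on m ys)"
proof (induction xs)
  case (Cons x xs)
  then show ?case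
    by (cases "split_on m xs") (auto simp: butlast_append)
qed simp

lemma split_on_append_sep: "split_on m (xs @ m # ys) = split_on m xs @ split_on m ys"
proof (induction xs)
  case (Cons x xs)
  then show ?case by (cases "split_on m xs") auto
qed simp

lemma split_on_map:
  assumes "\<forall>x\<in>set xs. f x = f m \<longleftrightarrow> x = m"
  shows "split_on (f m) (map f xs) = map (map f) (split_on m xs)"
  using assms
proof (induction xs)
  case (Cons x xs)
  then show ?case by (cases "split_on m xs") (auto simp: hd_map map_tl)
qed simp

lemma split_on_Cons_cases:
  assumes "Q \<in> set (split_on m (x # xs))"
  obtains "Q = []" | "x \<noteq> m" "Q = x # hd (split_on m xs)" | "Q \<in> set (split_on m xs)"
  using assms list.set_sel(2)[OF split_on_not_Nil] by (auto split: if_splits)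

lemma set_split_on: "Q \<in> set (split_on m xs) \<Longrightarrow> set Q \<subseteq> set xs - {m}"
proof (induction xs arbitrary: Q)
  case (Cons x xs)
  have hd_piece: "set (hd (split_on m xs)) \<subseteq> set xs - {m}"
    using Cons.IH[OF list.set_sel(1)[OF split_on_not_Nil]] .
  from Cons.prems show ?case
    by (cases rule: split_on_Cons_cases) (use Cons.IH hd_piece in force)+
qed simp

lemma length_split_on_le: "Q \<in> set (split_on m xs) \<Longrightarrow> length Q \<le> length xs"
proof (induction xs arbitrary: Q)
  case (Cons x xs)
  have hd_piece: "length (hd (split_on m xs)) \<le> length xs"
    using Cons.IH[OF list.set_sel(1)[OF split_on_not_Nil]] .
  from Cons.prems show ?case
    by (cases rule: split_on_Cons_cases) (use Cons.IH hd_piece in \<open>auto simp: le_SucI\<close>)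
qed simp

lemma length_split_on_less:
  assumes "m \<in> set xs" "Q \<in> set (split_on m xs)"
  shows "length Q < length xs"
proof -
  have "Q \<noteq> xs" using assms set_split_on[OF assms(2)] by blast
  moreover obtain ys zs where "xs = ys @ m # zs" using assms(1) by (meson split_list)
  ultimately show ?thesis
    using assms(2) length_split_on_le[of Q m ys] length_split_on_le[of Q m zs]
    by (auto simp: split_on_append_sep)
qed

lemma split_on_append_cases:
  assumes "Q \<in> set (split_on m (P @ S))"
  obtains "set Q \<subseteq> set P" | "set Q \<subseteq> set S" | "Q = last (split_on m P) @ hd (split_on m S)"
proof -
  have "Q \<in> set (butlast (split_on m P)) \<or> Q = last (split_on m P) @ hd (split_on m S)
        \<or> Q \<in> set (tl (split_on m S))"
    using assms by (auto simp: split_on_append)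
  then show ?thesis
  proof (elim disjE)
    assume "Q \<in> set (butlast (split_on m P))"
    then show ?thesis using that(1) by (meson Diff_subset in_set_butlastD set_split_on subset_trans)
  next
    assume "Q \<in> set (tl (split_on m S))"
    then show ?thesis
      using that(2) by (meson Diff_subset list.set_sel(2)[OF split_on_not_Nil] set_split_on subset_trans)
  qed (rule that(3))
qed

lemma two_le_length_split_on: "m \<in> set xs \<Longrightarrow> 2 \<le> length (split_on m xs)"
proof -
  assume "m \<in> set xs"
  then obtain ys zs where "xs = ys @ m # zs" by (meson split_list)
  then show ?thesis
    by (cases "split_on m ys"; cases "split_on m zs") (auto simp: split_on_append_sep)
qed

lemma join_on_Cons: "Ps \<noteq> [] \<Longrightarrow> join_on m (P # Ps) = P @ m # join_on m Ps"
  by (cases Ps) auto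

lemma join_on_snoc: "Ps \<noteq> [] \<Longrightarrow> join_on m (Ps @ [P]) = join_on m Ps @ m # P"
  by (cases Ps) auto

lemma join_on_middle:
  "join_on m (As @ W # Bs) =
     (if As = [] then [] else join_on m As @ [m]) @ W @ (if Bs = [] then [] else m # join_on m Bs)"
  by (cases As; cases Bs) auto

lemma split_on_join_on:
  "Ps \<noteq> [] \<Longrightarrow> \<forall>Q\<in>set Ps. m \<notin> set Q \<Longrightarrow> split_on m (join_on m Ps) = Ps"
proof (induction Ps rule: rev_induct)
  case (snoc P Ps)
  then show ?case
    by (cases "Ps = []") (simp_all add: join_on_snoc split_on_append_sep split_on_notin)
qed simp

lemma set_join_on:
  "Ps \<noteq> [] \<Longrightarrow> set (join_on m Ps) = (\<Union>Q\<in>set Ps. set Q) \<union> (if 2 \<le> length Ps then {m} else {})"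
  by (cases Ps; cases "tl Ps") auto

lemma set_join_on_subset: "set (join_on m Ps) \<subseteq> insert m (\<Union>Q\<in>set Ps. set Q)"
  by (cases Ps) auto

lemma map_join_on: "map f (join_on m Ps) = join_on (f m) (map (map f) Ps)"
  by (cases Ps) (auto simp: map_concat comp_def)

lemma word_eq_join_on: "word (LNode k cs) = join_on k (map word cs)"
  by (cases cs) (auto simp: comp_def)


section \<open>Decoding a word into a labelled tree\<close>

text \<open>The inverse of \<open>word\<close> on increasingly labelled trees: the smallest letter labels the root and its
  occurrences separate the words of the children.\<close>

function ltree_of_word :: "nat list \<Rightarrow> ltree" where
  "ltree_of_word x =
     (if x = [] then LLeaf
      else LNode (Min (set x)) (map ltree_of_word (split_on (Min (set x)) x)))"
  by auto
termination
  by (relation "measure length") (auto intro!: length_split_on_less)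

declare ltree_of_word.simps [simp del]

definition ptree_of_word :: "nat list \<Rightarrow> ptree" where
  "ptree_of_word x = strip (ltree_of_word x)"

lemma ltree_of_word_Nil [simp]: "ltree_of_word [] = LLeaf"
  by (simp add: ltree_of_word.simps)

lemma ltree_of_word_min:
  assumes "m \<in> set x" "\<forall>v\<in>set x. m \<le> v"
  shows "ltree_of_word x = LNode m (map ltree_of_word (split_on m x))"
proof -
  have "Min (set x) = m" using assms by (intro Min_eqI) auto
  then show ?thesis using assms(1) by (auto simp: ltree_of_word.simps[of x])
qed

lemma ltree_of_word_not_Nil:
  "x \<noteq> [] \<Longrightarrow> ltree_of_word x = LNode (Min (set x)) (map ltree_of_word (split_on (Min (set x)) x))"
  by (simp add: ltree_of_word_min)

lemma ptree_of_word_min: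
  "m \<in> set x \<Longrightarrow> \<forall>v\<in>set x. m \<le> v \<Longrightarrow> ptree_of_word x = Node (map ptree_of_word (split_on m x))"
  by (simp add: ptree_of_word_def ltree_of_word_min)

definition incr_ltree :: "ltree \<Rightarrow> bool" where
  "incr_ltree u \<longleftrightarrow> wf_ptree (strip u) \<and> lbl_incr u"

lemma incr_ltree_of_word: "incr_ltree (ltree_of_word x)"
proof (induction x rule: ltree_of_word.induct)
  case (1 x)
  show ?case
  proof (cases "x = []")
    case False
    let ?m = "Min (set x)"
    have "2 \<le> length (split_on ?m x)" using False by (simp add: two_le_length_split_on)
    moreover have "?m < k'" if "Q \<in> set (split_on ?m x)" "ltree_of_word Q = LNode k' ds" for Q k' ds
    proof -
      have "Q \<noteq> []" using that(2) by auto
      moreover from this have "k' = Min (set Q)" using that(2) by (simp add: ltree_of_word_not_Nil)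
      moreover have "set Q \<subseteq> set x - {?m}" using set_split_on[OF that(1)] .
      ultimately show ?thesis
        by (metis Diff_iff List.finite_set Min_in Min_le insertI1 le_neq_implies_less set_empty subsetD)
    qed
    ultimately show ?thesis using 1 False by (auto simp: incr_ltree_def ltree_of_word_not_Nil)
  qed (simp add: incr_ltree_def)
qed

fun relabel :: "(nat \<Rightarrow> nat) \<Rightarrow> ltree \<Rightarrow> ltree" where
  "relabel f LLeaf = LLeaf"
| "relabel f (LNode k cs) = LNode (f k) (map (relabel f) cs)"

lemma strip_relabel [simp]: "strip (relabel f u) = strip u"
  by (induction u) (auto simp: map_idI)

lemma word_relabel: "word (relabel f u) = map f (word u)"
  by (induction u) (auto simp: word_eq_join_on map_join_on comp_def cong: map_cong)

lemma labels_relabel: "labels (relabel f u) = map f (labels u)"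
  by (induction u) (auto simp: map_concat cong: map_cong)

lemma ltree_of_word_map_strict_mono:
  assumes "strict_mono_on (set w) f"
  shows "ltree_of_word (map f w) = relabel f (ltree_of_word w)"
  using assms
proof (induction w rule: ltree_of_word.induct)
  case (1 w)
  show ?case
  proof (cases "w = []")
    case False
    let ?m = "Min (set w)"
    have m: "?m \<in> set w" "\<forall>v\<in>set w. ?m \<le> v" using False by auto
    have f_m: "\<forall>v\<in>set w. f v = f ?m \<longleftrightarrow> v = ?m"
      using "1.prems" m(1) by (metis strict_mono_on_eqD)
    have "f ?m \<le> f v" if "v \<in> set w" for v
      using "1.prems" m that by (metis strict_mono_on_leD)
    then have "ltree_of_word (map f w) = LNode (f ?m) (map ltree_of_word (split_on (f ?m) (map f w)))"
      using m by (intro ltree_of_word_min) auto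
    also have "split_on (f ?m) (map f w) = map (map f) (split_on ?m w)"
      by (rule split_on_map[OF f_m])
    also have "map ltree_of_word (map (map f) (split_on ?m w)) = map (relabel f) (map ltree_of_word (split_on ?m w))"
    proof -
      have "strict_mono_on (set Q) f" if "Q \<in> set (split_on ?m w)" for Q
        using "1.prems" set_split_on[OF that] by (blast intro: monotone_on_subset)
      then show ?thesis using "1.IH"[OF False] by simp
    qed
    finally show ?thesis using False by (simp add: ltree_of_word_not_Nil[of w])
  qed simp
qed

lemma lbl_incr_hd_labels_le: "lbl_incr u \<Longrightarrow> l \<in> set (labels u) \<Longrightarrow> hd (labels u) \<le> l"
proof (induction u)
  case (LNode k cs)
  show ?case
  proof (cases "l = k")
    case False
    then obtain c where c: "c \<in> set cs" "l \<in> set (labels c)" using LNode.prems(2) by auto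
    obtain k' ds where "c = LNode k' ds" using c(2) by (cases c) auto
    with LNode c show ?thesis by (fastforce intro: order_trans)
  qed simp
qed simp

lemma lbl_incr_child_labels_gt:
  "lbl_incr (LNode k cs) \<Longrightarrow> c \<in> set cs \<Longrightarrow> l \<in> set (labels c) \<Longrightarrow> k < l"
proof -
  assume incr: "lbl_incr (LNode k cs)" and c: "c \<in> set cs" "l \<in> set (labels c)"
  obtain k' ds where c_eq: "c = LNode k' ds" using c(2) by (cases c) auto
  then have "k < k'" using incr c(1) by auto
  also have "k' \<le> l" using lbl_incr_hd_labels_le[of c l] incr c c_eq by auto
  finally show ?thesis .
qed

lemma set_word_subset_labels: "set (word u) \<subseteq> set (labels u)"
proof (induction u)
  case (LNode k cs)
  have "set (word (LNode k cs)) \<subseteq> insert k (\<Union>c\<in>set cs. set (word c))"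
    using set_join_on_subset[of k "map word cs"] by (simp add: word_eq_join_on)
  also have "\<dots> \<subseteq> insert k (\<Union>c\<in>set cs. set (labels c))" using LNode.IH by blast
  finally show ?case by simp
qed simp

lemma set_word_eq_labels: "wf_ptree (strip u) \<Longrightarrow> set (word u) = set (labels u)"
proof (induction u)
  case (LNode k cs)
  then have "2 \<le> length cs" "map word cs \<noteq> []" by auto
  with LNode show ?case by (auto simp: word_eq_join_on set_join_on)
qed simp

lemma ltree_of_word_word: "incr_ltree u \<Longrightarrow> ltree_of_word (word u) = u"
proof (induction u)
  case (LNode k cs)
  then have cs: "2 \<le> length cs" "\<forall>c\<in>set cs. incr_ltree c" "map word cs \<noteq> []"
    by (auto simp: incr_ltree_def)
  have above_k: "\<forall>c\<in>set cs. \<forall>l\<in>set (word c). k < l"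
    using lbl_incr_child_labels_gt[of k cs] LNode.prems set_word_subset_labels
    unfolding incr_ltree_def by blast
  have "set (word (LNode k cs)) = insert k (\<Union>c\<in>set cs. set (word c))"
    using cs by (auto simp: word_eq_join_on set_join_on)
  then have "ltree_of_word (word (LNode k cs)) = LNode k (map ltree_of_word (split_on k (word (LNode k cs))))"
    using above_k by (intro ltree_of_word_min) (auto intro: less_imp_le)
  also have "split_on k (word (LNode k cs)) = map word cs"
    unfolding word_eq_join_on using above_k cs by (intro split_on_join_on) auto
  finally show ?case using LNode.IH cs(2) by (simp add: map_idI)
qed simp


section \<open>Adjacent transpositions and the planar weak order\<close>

definition swap_succ :: "nat \<Rightarrow> nat \<Rightarrow> nat" where
  "swap_succ a v = (if v = a then Suc a else if v = Suc a then a else v)"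

lemma swapT_eq_map_swap_succ: "swapT a w = map (swap_succ a) w"
  by (simp add: swapT_def swap_succ_def)

lemma swap_succ_swap_succ [simp]: "swap_succ a (swap_succ a v) = v"
  by (auto simp: swap_succ_def)

lemma swap_succ_eq_iff: "swap_succ a v = swap_succ a w \<longleftrightarrow> v = w"
  by (metis swap_succ_swap_succ)

lemma swap_succ_simps [simp]:
  "swap_succ a a = Suc a" "swap_succ a (Suc a) = a"
  "v \<noteq> a \<Longrightarrow> v \<noteq> Suc a \<Longrightarrow> swap_succ a v = v"
  by (auto simp: swap_succ_def)

lemma strict_mono_on_swap_succ: "\<not> (a \<in> S \<and> Suc a \<in> S) \<Longrightarrow> strict_mono_on S (swap_succ a)"
  by (auto simp: swap_succ_def monotone_on_def)

lemma map_swap_succ_id: "a \<notin> set Q \<Longrightarrow> Suc a \<notin> set Q \<Longrightarrow> map (swap_succ a) Q = Q"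
  by (induction Q) auto

lemma set_map_swap_succ:
  assumes "a \<in> set x" "Suc a \<in> set x"
  shows "set (map (swap_succ a) x) = set x"
proof -
  have "swap_succ a v \<in> set x" if "v \<in> set x" for v
    using assms that by (auto simp: swap_succ_def)
  then show ?thesis by (auto intro: image_eqI[where x = "swap_succ a _"])
qed

lemma swap_succ_image_iff: "v \<in> swap_succ a ` A \<longleftrightarrow> swap_succ a v \<in> A"
  by (auto intro: image_eqI[where x = "swap_succ a v"])

lemma positions_map_swap_succ: "positions (map (swap_succ a) x) v = positions x (swap_succ a v)"
  unfolding positions_def by (auto simp: swap_succ_eq_iff[symmetric])

lemma packed_interval: "set w = {1..n} \<Longrightarrow> packed w"
proof -
  assume w: "set w = {1..n}"
  have "Max (insert 0 {1..n}) = n" by (rule Max_eqI) auto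
  with w show ?thesis by (simp add: packed_def)
qed

lemma iInv_subset: "iInv x \<subseteq> set x \<times> set x"
  unfolding iInv_def by auto

lemma finite_iInv: "finite (iInv x)"
  using iInv_subset finite_subset by blast

lemma iInv_map_swap_succ:
  "iInv (map (swap_succ a) x) - {(a, Suc a)} = map_prod (swap_succ a) (swap_succ a) ` (iInv x - {(a, Suc a)})"
proof -
  have mem: "(p, q) \<in> iInv (map (swap_succ a) x) \<longleftrightarrow> (swap_succ a p, swap_succ a q) \<in> iInv x"
    if "(p, q) \<noteq> (a, Suc a)" "(p, q) \<noteq> (Suc a, a)" for p q
  proof -
    have "p < q \<longleftrightarrow> swap_succ a p < swap_succ a q" using that by (auto simp: swap_succ_def)
    then show ?thesis
      unfolding iInv_def by (simp add: positions_map_swap_succ swap_succ_image_iff del: swap_succ_simps)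
  qed
  have swap_ne: "(swap_succ a p, swap_succ a q) \<noteq> (a, Suc a)" "(p, q) \<noteq> (Suc a, a)"
    if "p < q" for p q
    using that by (auto simp: swap_succ_def)
  show ?thesis
  proof (intro equalityI subsetI)
    fix z assume z: "z \<in> iInv (map (swap_succ a) x) - {(a, Suc a)}"
    then obtain p q where pq: "z = (p, q)" "p < q" by (auto simp: iInv_def)
    then have "(swap_succ a p, swap_succ a q) \<in> iInv x - {(a, Suc a)}"
      using z mem[of p q] swap_ne[of p q] by simp
    then show "z \<in> map_prod (swap_succ a) (swap_succ a) ` (iInv x - {(a, Suc a)})"
      using pq by (auto intro: image_eqI[where x = "(swap_succ a p, swap_succ a q)"])
  next
    fix z assume "z \<in> map_prod (swap_succ a) (swap_succ a) ` (iInv x - {(a, Suc a)})"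
    then obtain p q where pq: "(p, q) \<in> iInv x" "(p, q) \<noteq> (a, Suc a)" "z = (swap_succ a p, swap_succ a q)"
      by auto
    moreover have "(swap_succ a p, swap_succ a q) \<noteq> (Suc a, a)"
      using pq(2) by (auto simp: swap_succ_def)
    moreover have "p < q" using pq(1) by (simp add: iInv_def)
    ultimately show "z \<in> iInv (map (swap_succ a) x) - {(a, Suc a)}"
      using mem[of "swap_succ a p" "swap_succ a q"] swap_ne[of p q] by simp
  qed
qed

lemma card_iInv_map_swap_succ:
  "card (iInv (map (swap_succ a) x)) + of_bool ((a, Suc a) \<in> iInv x)
     = card (iInv x) + of_bool ((a, Suc a) \<in> iInv (map (swap_succ a) x))"
proof -
  have "inj (map_prod (swap_succ a) (swap_succ a))"
    by (auto simp: inj_def swap_succ_eq_iff)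
  then have "card (iInv (map (swap_succ a) x) - {(a, Suc a)}) = card (iInv x - {(a, Suc a)})"
    unfolding iInv_map_swap_succ by (rule card_image[OF inj_on_subset]) simp
  moreover have "card (iInv w) = card (iInv w - {(a, Suc a)}) + of_bool ((a, Suc a) \<in> iInv w)" for w
    using card.remove[OF finite_iInv, of "(a, Suc a)" w] by (cases "(a, Suc a) \<in> iInv w") simp_all
  ultimately show ?thesis by simp
qed

lemma finite_positions [simp]: "finite (positions x v)"
  by (simp add: positions_def)

lemma positions_eq_empty_iff [simp]: "positions x v = {} \<longleftrightarrow> v \<notin> set x"
  by (auto simp: positions_def in_set_conv_nth)

lemma Max_positions_less_Min_positions:
  assumes "x = P @ S" "a \<in> set P" "a \<notin> set S" "b \<in> set S" "b \<notin> set P"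
  shows "Max (positions x a) < Min (positions x b)"
proof -
  have "p < length P" if "p \<in> positions x a" for p
    using that assms(1,3) by (auto simp: positions_def nth_append dest: nth_mem split: if_splits)
  moreover have "length P \<le> p" if "p \<in> positions x b" for p
    using that assms(1,5) by (auto simp: positions_def nth_append dest: nth_mem split: if_splits)
  moreover have "positions x a \<noteq> {}" "positions x b \<noteq> {}" using assms(1,2,4) by auto
  ultimately show ?thesis
    by (meson Max_in Min_in finite_positions less_le_trans)
qed

lemma split_at_Max_positions:
  assumes "\<forall>p\<in>positions x b. Max (positions x a) < p"
  obtains P S where "x = P @ S" "a \<notin> set S" "b \<notin> set P"
proof
  let ?i = "Max (positions x a)"
  show "a \<notin> set (drop (Suc ?i) x)"
  proof
    assume "a \<in> set (drop (Suc ?i) x)"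
    then obtain j where "j < length x - Suc ?i" "x ! (Suc ?i + j) = a"
      by (auto simp: in_set_conv_nth)
    then have "Suc ?i + j \<in> positions x a" by (simp add: positions_def)
    then have "Suc ?i + j \<le> ?i" by (rule Max_ge[OF finite_positions])
    then show False by simp
  qed
  show "b \<notin> set (take (Suc ?i) x)"
  proof
    assume "b \<in> set (take (Suc ?i) x)"
    then obtain j where "j \<in> positions x b" "j < Suc ?i"
      by (auto simp: in_set_conv_nth positions_def)
    then show False using assms by auto
  qed
qed simp

lemma pw_cover_imp_swap:
  assumes "pw_cover x y"
  obtains a P S where "x = P @ S" "a \<notin> set S" "Suc a \<notin> set P" "y = map (swap_succ a) x"
proof -
  obtain a where a: "x = map (swap_succ a) y" "card (iInv y) = card (iInv x) + 1"
    using assms by (auto simp: pw_cover_def swapT_eq_map_swap_succ)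
  then have y: "y = map (swap_succ a) x" by (simp add: comp_def)
  have "(a, Suc a) \<in> iInv y"
    using card_iInv_map_swap_succ[of a y] a by (cases "(a, Suc a) \<in> iInv y") auto
  then have "Max (positions x a) < Min (positions x (Suc a))"
    by (simp add: iInv_def y positions_map_swap_succ)
  then have "\<forall>p\<in>positions x (Suc a). Max (positions x a) < p"
    using Min_le[OF finite_positions] less_le_trans by blast
  then show ?thesis
    using that y by (metis split_at_Max_positions)
qed

definition swap_up :: "nat list \<Rightarrow> nat list \<Rightarrow> bool" where
  "swap_up x y \<longleftrightarrow> (\<exists>a P S. x = P @ S \<and> a \<in> set P \<and> a \<notin> set S \<and> Suc a \<in> set S \<and> Suc a \<notin> set P
      \<and> y = map (swap_succ a) x)"

lemma set_swap_up: "swap_up x y \<Longrightarrow> set y = set x"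
  unfolding swap_up_def by (metis Un_iff set_append set_map_swap_succ)

lemma swap_up_imp_pw_cover:
  assumes "swap_up x y" "packed x"
  shows "pw_cover x y"
proof -
  obtain a P S where x: "x = P @ S" "a \<in> set P" "a \<notin> set S" "Suc a \<in> set S" "Suc a \<notin> set P"
    and y: "y = map (swap_succ a) x"
    using assms(1) by (auto simp: swap_up_def)
  have sep: "Max (positions x a) < Min (positions x (Suc a))"
    by (rule Max_positions_less_Min_positions[OF x])
  have "a \<in> set x" "Suc a \<in> set x" using x(1-4) by auto
  moreover have "Min (positions x v) \<le> Max (positions x v)" if "v \<in> set x" for v
    using that by (intro Min_le Max_in) simp_all
  ultimately have "Min (positions x a) < Max (positions x (Suc a))"
    using sep by (meson le_less_trans less_le_trans)
  then have "(a, Suc a) \<notin> iInv x" by (simp add: iInv_def)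
  moreover have "(a, Suc a) \<in> iInv y"
    using sep \<open>a \<in> set x\<close> \<open>Suc a \<in> set x\<close>
    by (simp add: iInv_def y positions_map_swap_succ swap_succ_image_iff)
  ultimately have "card (iInv y) = card (iInv x) + 1"
    using card_iInv_map_swap_succ[of a x] y by simp
  moreover have "packed y"
    using assms(2) set_swap_up[OF assms(1)] by (simp add: packed_def)
  ultimately show ?thesis
    using assms(2) y by (auto simp: pw_cover_def swapT_eq_map_swap_succ comp_def intro!: exI[of _ a])
qed


section \<open>Monotonicity of the underlying tree\<close>

lemma ltree_of_word_map_swap_succ_mono:
  "\<not> (a \<in> set Q \<and> Suc a \<in> set Q) \<Longrightarrow>
     ltree_of_word (map (swap_succ a) Q) = relabel (swap_succ a) (ltree_of_word Q)"
  by (intro ltree_of_word_map_strict_mono strict_mono_on_swap_succ)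

lemma ptree_of_word_map_swap_succ_mono:
  "\<not> (a \<in> set Q \<and> Suc a \<in> set Q) \<Longrightarrow> ptree_of_word (map (swap_succ a) Q) = ptree_of_word Q"
  by (simp add: ptree_of_word_def ltree_of_word_map_swap_succ_mono)

lemma ltree_of_word_map_swap_succ_below:
  assumes "m \<in> set x" "\<forall>v\<in>set x. m \<le> v" "m < a"
  shows "ltree_of_word (map (swap_succ a) x) =
           LNode m (map (ltree_of_word \<circ> map (swap_succ a)) (split_on m x))"
proof -
  have m: "swap_succ a m = m" using assms(3) by simp
  have "ltree_of_word (map (swap_succ a) x) = LNode m (map ltree_of_word (split_on m (map (swap_succ a) x)))"
    using assms by (intro ltree_of_word_min) (auto simp: swap_succ_def)
  also have "split_on m (map (swap_succ a) x) = map (map (swap_succ a)) (split_on m x)"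
    using split_on_map[of x "swap_succ a" m] m by (metis swap_succ_eq_iff)
  finally show ?thesis by simp
qed

lemma ptree_of_word_map_swap_succ_below:
  assumes "m \<in> set x" "\<forall>v\<in>set x. m \<le> v" "m < a"
  shows "ptree_of_word (map (swap_succ a) x) =
           Node (map (ptree_of_word \<circ> map (swap_succ a)) (split_on m x))"
  using ltree_of_word_map_swap_succ_below[OF assms] by (simp add: ptree_of_word_def)

text \<open>A separating letter \<open>e < a\<close> keeps \<open>a\<close> and \<open>a + 1\<close> in different subtrees, so the swap
  only relabels.\<close>

lemma ltree_of_word_swap_succ_separated:
  assumes "e < a" "a \<notin> set S" "Suc a \<notin> set P"
  shows "ltree_of_word (map (swap_succ a) (P @ e # S)) = relabel (swap_succ a) (ltree_of_word (P @ e # S))"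
  using assms
proof (induction "length (P @ e # S)" arbitrary: P e S rule: less_induct)
  case less
  let ?x = "P @ e # S"
  let ?m = "Min (set ?x)"
  have "?m \<le> e" by (rule Min_le) simp_all
  then have m: "?m \<in> set ?x" "\<forall>v\<in>set ?x. ?m \<le> v" "?m < a"
    using less.prems(1) by (simp_all del: set_append)
  have "ltree_of_word (map (swap_succ a) Q) = relabel (swap_succ a) (ltree_of_word Q)"
    if Q: "Q \<in> set (split_on ?m (P @ (e # S)))" for Q
  proof (cases rule: split_on_append_cases[OF Q])
    case 1
    then show ?thesis using less.prems(3) by (blast intro: ltree_of_word_map_swap_succ_mono)
  next
    case 2
    then show ?thesis using less.prems(1,2) by (force intro: ltree_of_word_map_swap_succ_mono)
  next
    case 3
    let ?L = "last (split_on ?m P)" and ?H = "hd (split_on ?m S)"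
    have "set ?L \<subseteq> set P" "set ?H \<subseteq> set S"
      using set_split_on[OF last_in_set[OF split_on_not_Nil]]
        set_split_on[OF list.set_sel(1)[OF split_on_not_Nil]] by blast+
    then have L: "Suc a \<notin> set ?L" and H: "a \<notin> set ?H" using less.prems(2,3) by blast+
    show ?thesis
    proof (cases "e = ?m")
      case True
      then show ?thesis using 3 L by (simp add: ltree_of_word_map_swap_succ_mono)
    next
      case False
      then have "Q = ?L @ e # ?H" using 3 by simp
      moreover have "length Q < length ?x" using length_split_on_less[OF m(1) Q] by simp
      ultimately show ?thesis using less.hyps[of ?L e ?H] less.prems(1) L H by simp
    qed
  qed
  then show ?case
    using ltree_of_word_map_swap_succ_below[OF m] ltree_of_word_min[OF m(1,2)] m(3) by simp
qed

lemma map_swap_succ_split_on_id: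
  "Q \<in> set (split_on m x) \<Longrightarrow> {a, Suc a} \<subseteq> insert m (- set x) \<Longrightarrow> map (swap_succ a) Q = Q"
  using set_split_on[of Q m x] by (intro map_swap_succ_id) auto

text \<open>The two sides of a swap at the minimal letter \<open>a\<close> of a word: \<open>B @ [L]\<close> and \<open>H # T\<close> are the
  pieces of the part before the last \<open>a\<close> and of the part after it, cut at \<open>a\<close> and at \<open>a + 1\<close>.\<close>

lemma ptree_of_word_before_swap_at_min:
  assumes "a \<in> set P" "Suc a \<in> set S" "a \<notin> set S" "Suc a \<notin> set P" "\<forall>v\<in>set (P @ S). a \<le> v"
    and "split_on a P = B @ [L]" "split_on (Suc a) S = H # T"
  shows "ptree_of_word (P @ S) = Node (map ptree_of_word B @ [Node (ptree_of_word (L @ H) # map ptree_of_word T)])"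
proof -
  have L: "set L \<subseteq> set P - {a}" using set_split_on[of L a P] assms(6) by simp
  have "split_on a (P @ S) = B @ [L @ S]"
    using assms(3,6) by (simp add: split_on_append split_on_notin)
  then have root: "ptree_of_word (P @ S) = Node (map ptree_of_word B @ [ptree_of_word (L @ S)])"
    using ptree_of_word_min[of a "P @ S"] assms(1,5) by simp
  have "Suc a \<notin> set L" using L assms(4) by blast
  then have split: "split_on (Suc a) (L @ S) = (L @ H) # T"
    using assms(7) by (simp add: split_on_append split_on_notin)
  have "Suc a \<le> v" if "v \<in> set (L @ S)" for v
  proof -
    have "v \<in> set (P @ S)" "v \<noteq> a" using that L assms(3) by auto
    then show ?thesis using assms(5) by (auto simp: Suc_le_eq order_le_neq_trans)
  qed
  then have "ptree_of_word (L @ S) = Node (ptree_of_word (L @ H) # map ptree_of_word T)"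
    using ptree_of_word_min[of "Suc a" "L @ S"] assms(2) split by simp
  with root show ?thesis by simp
qed

lemma ptree_of_word_after_swap_at_min:
  assumes "a \<in> set P" "Suc a \<in> set S" "a \<notin> set S" "Suc a \<notin> set P" "\<forall>v\<in>set (P @ S). a \<le> v"
    and "split_on a P = B @ [L]" "split_on (Suc a) S = H # T"
  shows "ptree_of_word (map (swap_succ a) (P @ S)) =
           Node (Node (map ptree_of_word B @ [ptree_of_word (L @ H)]) # map ptree_of_word T)"
proof -
  let ?P' = "map (swap_succ a) P" and ?S' = "map (swap_succ a) S"
  have "split_on (swap_succ a (Suc a)) ?S' = map (map (swap_succ a)) (split_on (Suc a) S)"
    by (rule split_on_map) (simp add: swap_succ_eq_iff del: swap_succ_simps)
  also have "\<dots> = H # T"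
    using map_swap_succ_split_on_id[of _ "Suc a" S a] assms(3,7) by (auto simp: map_idI)
  finally have S': "split_on a ?S' = H # T" by simp
  have "split_on (swap_succ a a) ?P' = map (map (swap_succ a)) (split_on a P)"
    by (rule split_on_map) (simp add: swap_succ_eq_iff del: swap_succ_simps)
  also have "\<dots> = B @ [L]"
    using map_swap_succ_split_on_id[of _ a P a] assms(4,6) by (auto simp: map_idI)
  finally have P': "split_on (Suc a) ?P' = B @ [L]" by simp
  have H: "set H \<subseteq> set S - {Suc a}" using set_split_on[of H "Suc a" S] assms(7) by simp
  have "a \<notin> set ?P'" using assms(4) by (auto simp: swap_succ_image_iff)
  then have "split_on a (?P' @ ?S') = (?P' @ H) # T"
    using S' by (simp add: split_on_append split_on_notin)
  then have "ptree_of_word (?P' @ ?S') = Node (ptree_of_word (?P' @ H) # map ptree_of_word T)"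
    using ptree_of_word_min[of a "?P' @ ?S'"] assms(2,5)
    by (force simp: swap_succ_image_iff swap_succ_def)
  moreover have "Suc a \<notin> set H" using H by blast
  then have split: "split_on (Suc a) (?P' @ H) = B @ [L @ H]"
    using P' by (simp add: split_on_append split_on_notin)
  have "Suc a \<le> w" if w: "w \<in> set (?P' @ H)" for w
  proof (cases "w \<in> set H")
    case True
    then have "w \<in> set (P @ S)" "w \<noteq> a" "w \<noteq> Suc a" using H assms(3) by auto
    then show ?thesis using assms(5) by (auto simp: Suc_le_eq order_le_neq_trans)
  next
    case False
    then obtain v where "v \<in> set P" "w = swap_succ a v" using w by auto
    then show ?thesis using assms(4,5) by (auto simp: swap_succ_def Suc_le_eq order_le_neq_trans)
  qed
  then have "ptree_of_word (?P' @ H) = Node (map ptree_of_word B @ [ptree_of_word (L @ H)])"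
    using ptree_of_word_min[of "Suc a" "?P' @ H"] assms(1) split by (force simp: swap_succ_image_iff)
  ultimately show ?thesis by simp
qed

lemma lrot_ptree_of_word_swap_at_min:
  assumes "a \<in> set P" "Suc a \<in> set S" "a \<notin> set S" "Suc a \<notin> set P" "\<forall>v\<in>set (P @ S). a \<le> v"
  shows "lrot (ptree_of_word (P @ S)) (ptree_of_word (map (swap_succ a) (P @ S)))"
proof -
  obtain B L where BL: "split_on a P = B @ [L]" by (metis rev_exhaust split_on_not_Nil)
  obtain H T where HT: "split_on (Suc a) S = H # T" by (metis neq_Nil_conv split_on_not_Nil)
  have "B \<noteq> []" "T \<noteq> []"
    using two_le_length_split_on[OF assms(1)] two_le_length_split_on[OF assms(2)] BL HT by auto
  then show ?thesis
    using lrot.root[of "map ptree_of_word B" "map ptree_of_word T" "ptree_of_word (L @ H)"]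
      ptree_of_word_before_swap_at_min[OF assms BL HT] ptree_of_word_after_swap_at_min[OF assms BL HT]
    by simp
qed

text \<open>An adjacent transposition that is a cover of the planar weak order either leaves the underlying
  tree unchanged or performs one left rotation: at the node labelled by the smallest letter, if that
  letter is \<open>a\<close>, and inside the subtree containing both \<open>a\<close> and \<open>a + 1\<close> otherwise.\<close>

lemma ptree_of_word_swap_succ:
  assumes "a \<notin> set S" "Suc a \<notin> set P"
  shows "ptree_of_word (map (swap_succ a) (P @ S)) = ptree_of_word (P @ S)
           \<or> lrot (ptree_of_word (P @ S)) (ptree_of_word (map (swap_succ a) (P @ S)))"
  using assms
proof (induction "length (P @ S)" arbitrary: P S rule: less_induct)
  case less
  let ?m = "Min (set (P @ S))"
  have "?m \<le> a" if "a \<in> set (P @ S)" using that by simp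
  then consider "\<not> (a \<in> set (P @ S) \<and> Suc a \<in> set (P @ S))"
    | "a \<in> set P" "Suc a \<in> set S" "?m = a" | "a \<in> set P" "Suc a \<in> set S" "?m < a"
    using less.prems by (metis Un_iff le_neq_implies_less set_append)
  then show ?case
  proof cases
    case 1
    then show ?thesis using ptree_of_word_map_swap_succ_mono by blast
  next
    case 2
    then show ?thesis using less.prems lrot_ptree_of_word_swap_at_min[of a P S] by auto
  next
    case 3
    have "set (P @ S) \<noteq> {}" using 3 by auto
    then have m: "?m \<in> set (P @ S)" "\<forall>v\<in>set (P @ S). ?m \<le> v" "?m < a"
      using 3 by (auto simp del: set_append)
    let ?B = "butlast (split_on ?m P)" and ?M = "last (split_on ?m P) @ hd (split_on ?m S)"
      and ?T = "tl (split_on ?m S)"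
    have pieces: "split_on ?m (P @ S) = ?B @ ?M # ?T" by (simp add: split_on_append)
    have "ptree_of_word (map (swap_succ a) Q) = ptree_of_word Q" if "Q \<in> set ?B \<or> Q \<in> set ?T" for Q
      using that set_split_on[of Q ?m P] set_split_on[of Q ?m S] less.prems
      by (auto intro!: ptree_of_word_map_swap_succ_mono dest: in_set_butlastD list.set_sel(2)[OF split_on_not_Nil])
    then have x: "ptree_of_word (P @ S) = Node (map ptree_of_word ?B @ ptree_of_word ?M # map ptree_of_word ?T)"
      and y: "ptree_of_word (map (swap_succ a) (P @ S)) =
                Node (map ptree_of_word ?B @ ptree_of_word (map (swap_succ a) ?M) # map ptree_of_word ?T)"
      using ptree_of_word_min[OF m(1,2)] ptree_of_word_map_swap_succ_below[OF m] pieces by simp_all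
    have "set (last (split_on ?m P)) \<subseteq> set P" "set (hd (split_on ?m S)) \<subseteq> set S"
      using set_split_on[OF last_in_set[OF split_on_not_Nil]]
        set_split_on[OF list.set_sel(1)[OF split_on_not_Nil]] by blast+
    moreover have "length ?M < length (P @ S)"
      using length_split_on_less[OF m(1), of ?M] unfolding pieces by simp
    ultimately have "ptree_of_word (map (swap_succ a) ?M) = ptree_of_word ?M
                     \<or> lrot (ptree_of_word ?M) (ptree_of_word (map (swap_succ a) ?M))"
      using less.hyps less.prems by (meson map_append subsetD)
    then show ?thesis using x y lrot.sub by fastforce
  qed
qed

lemma pw_le_imp_pt_le: "pw_le x y \<Longrightarrow> pt_le (ptree_of_word x) (ptree_of_word y)"
  unfolding pw_le_def pt_le_def
proof (induction rule: rtranclp_induct)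
  case (step y z)
  from \<open>pw_cover y z\<close> obtain a P S
    where "y = P @ S" "a \<notin> set S" "Suc a \<notin> set P" "z = map (swap_succ a) y"
    by (rule pw_cover_imp_swap)
  then have "ptree_of_word z = ptree_of_word y \<or> lrot (ptree_of_word y) (ptree_of_word z)"
    using ptree_of_word_swap_succ by blast
  with step.IH show ?case by (auto intro: rtranclp.rtrancl_into_rtrancl)
qed simp


section \<open>The canonical labelling\<close>

fun num_internal :: "ptree \<Rightarrow> nat" where
  "num_internal Leaf = 0"
| "num_internal (Node cs) = Suc (sum_list (map num_internal cs))"

abbreviation num_internals :: "ptree list \<Rightarrow> nat" where
  "num_internals cs \<equiv> sum_list (map num_internal cs)"

text \<open>\<open>canon b t\<close> labels the internal nodes of \<open>t\<close> by \<open>b + 1, \<dots>, b + num_internal t\<close> in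
  preorder, visiting the children from right to left.\<close>

fun canon :: "nat \<Rightarrow> ptree \<Rightarrow> ltree" and canon_forest :: "nat \<Rightarrow> ptree list \<Rightarrow> ltree list" where
  "canon b Leaf = LLeaf"
| "canon b (Node cs) = LNode (Suc b) (canon_forest (Suc b) cs)"
| "canon_forest b [] = []"
| "canon_forest b (c # cs) = canon (b + num_internals cs) c # canon_forest b cs"

lemma strip_canon [simp]: "strip (canon b t) = t"
  and map_strip_canon_forest [simp]: "map strip (canon_forest b cs) = cs"
  by (induction b t and b cs rule: canon_canon_forest.induct) auto

lemma canon_forest_append:
  "canon_forest b (xs @ ys) = canon_forest (b + num_internals ys) xs @ canon_forest b ys"
  by (induction xs) (auto simp: add_ac)

lemma canon_Suc: "canon (Suc b) t = relabel Suc (canon b t)"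
  and canon_forest_Suc: "canon_forest (Suc b) cs = map (relabel Suc) (canon_forest b cs)"
  by (induction b t and b cs rule: canon_canon_forest.induct) auto

lemma length_labels: "length (labels u) = num_internal (strip u)"
  by (induction u) (auto simp: length_concat comp_def intro!: arg_cong[where f = sum_list])

lemma labels_canon:
  "distinct (labels (canon b t)) \<and> set (labels (canon b t)) = {Suc b..b + num_internal t}"
  and labels_canon_forest:
  "distinct (concat (map labels (canon_forest b cs)))
     \<and> set (concat (map labels (canon_forest b cs))) = {Suc b..b + num_internals cs}"
proof (induction b t and b cs rule: canon_canon_forest.induct)
  case (4 b c cs)
  then have "set (labels (canon (b + num_internals cs) c)) \<inter> set (concat (map labels (canon_forest b cs))) = {}"
    by auto
  with 4 show ?case by (auto simp: ivl_disj_un)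
qed auto

lemma lbl_incr_canon: "lbl_incr (canon b t)"
  and lbl_incr_canon_forest:
  "\<forall>c\<in>set (canon_forest b cs). lbl_incr c \<and> (\<forall>k ds. c = LNode k ds \<longrightarrow> b < k)"
proof (induction b t and b cs rule: canon_canon_forest.induct)
  case (4 b c cs)
  moreover have "\<forall>k ds. canon (b + num_internals cs) c = LNode k ds \<longrightarrow> b < k"
    by (cases c) auto
  ultimately show ?case by auto
qed auto

lemma incr_ltree_canon: "wf_ptree t \<Longrightarrow> incr_ltree (canon b t)"
  by (simp add: incr_ltree_def lbl_incr_canon)

lemma set_word_canon: "wf_ptree t \<Longrightarrow> set (word (canon b t)) = {Suc b..b + num_internal t}"
  using set_word_eq_labels[of "canon b t"] labels_canon[of b t] by simp

lemma set_word_canon_subset: "set (word (canon b t)) \<subseteq> {Suc b..b + num_internal t}"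
  using set_word_subset_labels[of "canon b t"] labels_canon[of b t] by simp

lemma set_words_canon_forest_subset:
  "(\<Union>W\<in>set (map word (canon_forest b cs)). set W) \<subseteq> {Suc b..b + num_internals cs}"
  using set_word_subset_labels labels_canon_forest[of b cs] by fastforce

lemma set_words_canon_forest:
  "\<forall>c\<in>set cs. wf_ptree c \<Longrightarrow>
     (\<Union>W\<in>set (map word (canon_forest b cs)). set W) = {Suc b..b + num_internals cs}"
proof -
  assume wf: "\<forall>c\<in>set cs. wf_ptree c"
  have "set (word c) = set (labels c)" if "c \<in> set (canon_forest b cs)" for c
  proof -
    have "strip c \<in> set cs" using that map_strip_canon_forest[of b cs] by (metis image_eqI set_map)
    then show ?thesis using wf set_word_eq_labels by blast
  qed
  then show ?thesis using labels_canon_forest[of b cs] by auto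
qed

lemma gsp_canon: "wf_ptree t \<Longrightarrow> gsp (canon 0 t)"
  using labels_canon[of 0 t] lbl_incr_canon[of 0 t] length_labels[of "canon 0 t"]
  by (simp add: gsp_def)

lemma avoids213_append_Cons:
  assumes "avoids213 A" "avoids213 B" "\<forall>a\<in>set A. \<forall>v\<in>set B. v < a" "\<forall>a\<in>set A. k < a" "\<forall>v\<in>set B. k \<le> v"
  shows "avoids213 (A @ k # B)"
  unfolding avoids213_def
proof (rule notI, elim exE conjE)
  fix i j l assume ij: "i < j" "j < l" "l < length (A @ k # B)"
    and v: "(A @ k # B) ! j < (A @ k # B) ! i" "(A @ k # B) ! i < (A @ k # B) ! l"
  let ?n = "length A"
  consider "l < ?n" | "?n < i" | "i < ?n" "?n \<le> l" | "i = ?n" by linarith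
  then show False
  proof cases
    case 1
    then show False using assms(1) ij v unfolding avoids213_def
      by (auto simp: nth_append)
  next
    case 2
    then have "(i - Suc ?n) < (j - Suc ?n)" "(j - Suc ?n) < (l - Suc ?n)" "(l - Suc ?n) < length B"
      using ij by auto
    moreover have "B ! (j - Suc ?n) < B ! (i - Suc ?n)" "B ! (i - Suc ?n) < B ! (l - Suc ?n)"
      using v 2 ij by (auto simp: nth_append nth_Cons')
    ultimately show False using assms(2) unfolding avoids213_def by blast
  next
    case 3
    have ai: "(A @ k # B) ! i \<in> set A" using 3 by (simp add: nth_append)
    show False
    proof (cases "l = ?n")
      case True
      then have "(A @ k # B) ! l = k" by (simp add: nth_append)
      then show False using v(2) ai assms(4) by fastforce
    next
      case False
      then have "(A @ k # B) ! l = B ! (l - Suc ?n)" "l - Suc ?n < length B" using 3 ij by (auto simp: nth_append nth_Cons')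
      then have "(A @ k # B) ! l \<in> set B" by simp
      then show False using v(2) ai assms(3) by fastforce
    qed
  next
    case 4
    then have "(A @ k # B) ! i = k" by (simp add: nth_append)
    moreover have "(A @ k # B) ! j = B ! (j - Suc ?n)" "j - Suc ?n < length B" using 4 ij by (auto simp: nth_append nth_Cons')
    ultimately show False using v(1) assms(5) by (metis nth_mem not_le)
  qed
qed

lemma avoids213_appendD1:
  assumes "avoids213 (A @ B)"
  shows "avoids213 A"
  unfolding avoids213_def
proof (intro notI, elim exE conjE)
  fix i j k assume "i < j" "j < k" "k < length A" "A ! j < A ! i" "A ! i < A ! k"
  then have "i < j \<and> j < k \<and> k < length (A @ B) \<and> (A @ B) ! j < (A @ B) ! i \<and> (A @ B) ! i < (A @ B) ! k"
    by (simp add: nth_append)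
  with assms show False unfolding avoids213_def by blast
qed

lemma avoids213_appendD2:
  assumes "avoids213 (A @ B)"
  shows "avoids213 B"
  unfolding avoids213_def
proof (intro notI, elim exE conjE)
  fix i j k assume "i < j" "j < k" "k < length B" "B ! j < B ! i" "B ! i < B ! k"
  then have "length A + i < length A + j \<and> length A + j < length A + k \<and> length A + k < length (A @ B)
      \<and> (A @ B) ! (length A + j) < (A @ B) ! (length A + i)
      \<and> (A @ B) ! (length A + i) < (A @ B) ! (length A + k)"
    by simp
  with assms show False unfolding avoids213_def by blast
qed

lemma avoids213_sepD: "avoids213 (A @ k # B) \<Longrightarrow> \<forall>a\<in>set A. k < a \<Longrightarrow> a \<in> set A \<Longrightarrow> v \<in> set B \<Longrightarrow> \<not> a < v"
proof
  assume h: "avoids213 (A @ k # B)" "\<forall>a\<in>set A. k < a" "a \<in> set A" "v \<in> set B" "a < v"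
  obtain i where i: "i < length A" "A ! i = a" using h(3) by (auto simp: in_set_conv_nth)
  obtain j where j: "j < length B" "B ! j = v" using h(4) by (auto simp: in_set_conv_nth)
  have "i < length A" "length A < length A + Suc j" "length A + Suc j < length (A @ k # B)"
    using i j by auto
  moreover have "(A @ k # B) ! length A < (A @ k # B) ! i" using i h(2) h(3) by (simp add: nth_append)
  moreover have "(A @ k # B) ! i < (A @ k # B) ! (length A + Suc j)" using i j h(5) by (simp add: nth_append)
  ultimately show False using h(1) unfolding avoids213_def by blast
qed

lemma avoids213_word_canon: "avoids213 (word (canon b t))"
  and avoids213_join_on_canon_forest: "avoids213 (join_on b (map word (canon_forest b cs)))"
proof (induction b t and b cs rule: canon_canon_forest.induct)
  case (2 b cs)
  then show ?case by (simp add: word_eq_join_on)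
next
  case (4 b c cs)
  show ?case
  proof (cases "cs = []")
    case False
    let ?W = "word (canon (b + num_internals cs) c)" and ?R = "join_on b (map word (canon_forest b cs))"
    have eq: "join_on b (map word (canon_forest b (c # cs))) = ?W @ b # ?R"
      using False by (cases cs) auto
    have "set ?W \<subseteq> {Suc (b + num_internals cs)..b + num_internals cs + num_internal c}"
      by (rule set_word_canon_subset)
    moreover have "set ?R \<subseteq> insert b {Suc b..b + num_internals cs}"
      using set_join_on_subset[of b "map word (canon_forest b cs)"] set_words_canon_forest_subset[of b cs]
      by blast
    ultimately show ?thesis
      unfolding eq using 4 by (intro avoids213_append_Cons) fastforce+
  qed (use 4 in simp)
qed (simp_all add: avoids213_def)

lemma interval_split_by_card:
  fixes lo n m :: nat
  assumes "A \<union> B = {Suc lo..lo+n}" "A \<inter> B = {}" "\<forall>a\<in>A. \<forall>v\<in>B. v < a" "card B = m"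
  shows "B = {Suc lo..lo+m} \<and> A = {Suc (lo+m)..lo+n}"
proof -
  have finB: "finite B" using assms(1) by (metis finite_Un finite_atLeastAtMost)
  have mn: "m \<le> n"
  proof -
    have "card B \<le> card {Suc lo..lo+n}" using assms(1) by (intro card_mono) auto
    then show ?thesis using assms(4) by simp
  qed
  have Agt: "\<forall>x\<in>A. lo + m < x"
  proof (rule ballI, rule ccontr)
    fix x assume x: "x \<in> A" "\<not> lo + m < x"
    have "B \<subseteq> {Suc lo..<x}" using assms(1) assms(3) x(1) by fastforce
    then have "card B \<le> card {Suc lo..<x}" by (intro card_mono) auto
    also have "\<dots> < m"
    proof -
      have "x \<in> {Suc lo..lo+n}" using assms(1) x(1) by blast
      then show ?thesis using x(2) by auto
    qed
    finally show False using assms(4) by simp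
  qed
  have sub: "{Suc lo..lo+m} \<subseteq> B"
  proof
    fix v assume v: "v \<in> {Suc lo..lo+m}"
    then have "v \<in> A \<union> B" using assms(1) mn by auto
    moreover have "v \<notin> A" using Agt v by auto
    ultimately show "v \<in> B" by blast
  qed
  have Beq: "B = {Suc lo..lo+m}"
    using card_subset_eq[OF finB sub] assms(4) by simp
  moreover have "A = {Suc lo..lo+n} - B" using assms(1) assms(2) by blast
  moreover have "{Suc lo..lo+n} - {Suc lo..lo+m} = {Suc (lo+m)..lo+n}" by auto
  ultimately show ?thesis by simp
qed

lemma labels_first_child_gt:
  assumes "avoids213 (join_on b (map word (c # cs)))" "cs \<noteq> []"
    and "\<forall>c\<in>set (c # cs). incr_ltree c" "distinct (concat (map labels (c # cs)))"
    and "\<forall>l\<in>set (labels c). b < l" "a \<in> set (labels c)" "v \<in> set (concat (map labels cs))"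
  shows "v < a"
proof -
  have avoid: "avoids213 (word c @ b # join_on b (map word cs))"
    using assms(1,2) join_on_Cons[of "map word cs" b "word c"] by simp
  have a: "a \<in> set (word c)" "\<forall>a\<in>set (word c). b < a"
    using assms(3,5,6) set_word_eq_labels by (auto simp: incr_ltree_def)
  obtain c' where c': "c' \<in> set cs" "v \<in> set (labels c')" using assms(7) by auto
  then have "v \<in> set (word c')" using assms(3) set_word_eq_labels by (auto simp: incr_ltree_def)
  then have "v \<in> set (join_on b (map word cs))" using c'(1) assms(2) by (auto simp: set_join_on)
  then have "\<not> a < v" using avoids213_sepD[OF avoid a(2) a(1)] by blast
  moreover have "a \<noteq> v" using assms(4,6,7) by auto
  ultimately show ?thesis by simp
qed

text \<open>The labels of the first child form the top segment of the interval, which pins down all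
  labels by induction.\<close>

lemma canon_forest_unique:
  assumes "\<And>c b. c \<in> set cs \<Longrightarrow> distinct (labels c) \<Longrightarrow>
             set (labels c) = {Suc b..b + length (labels c)} \<Longrightarrow> avoids213 (word c) \<Longrightarrow>
             c = canon b (strip c)"
    and "\<forall>c\<in>set cs. incr_ltree c" "distinct (concat (map labels cs))"
    and "set (concat (map labels cs)) = {Suc b..b + length (concat (map labels cs))}"
    and "avoids213 (join_on b (map word cs))" "\<forall>c\<in>set cs. \<forall>l\<in>set (labels c). b < l"
  shows "cs = canon_forest b (map strip cs)"
  using assms
proof (induction cs)
  case (Cons c cs)
  show ?case
  proof (cases "cs = []")
    case False
    let ?A = "set (labels c)" and ?B = "set (concat (map labels cs))"
    let ?M = "length (concat (map labels cs))"
    have avoid_c: "avoids213 (word c @ b # join_on b (map word cs))"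
      using Cons.prems(5) join_on_Cons[of "map word cs" b "word c"] False by simp
    have "?A \<union> ?B = {Suc b..b + (length (labels c) + ?M)}" "?A \<inter> ?B = {}"
      using Cons.prems(3,4) by auto
    moreover have "\<forall>l\<in>?A. b < l" using Cons.prems(6) by simp
    then have "\<forall>a\<in>?A. \<forall>v\<in>?B. v < a"
      using labels_first_child_gt[OF Cons.prems(5) False Cons.prems(2,3)] by simp
    moreover have "distinct (concat (map labels cs))" using Cons.prems(3) by simp
    then have "card ?B = ?M" by (rule distinct_card)
    ultimately have "?B = {Suc b..b + ?M} \<and> ?A = {Suc (b + ?M)..b + (length (labels c) + ?M)}"
      by (rule interval_split_by_card)
    then have B: "?B = {Suc b..b + ?M}" and "?A = {Suc (b + ?M)..b + (length (labels c) + ?M)}"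
      by simp_all
    then have A: "?A = {Suc (b + ?M)..b + ?M + length (labels c)}" by (simp add: add_ac)
    have "cs = canon_forest b (map strip cs)"
    proof (rule Cons.IH)
      show "avoids213 (join_on b (map word cs))"
        using avoids213_appendD2[of "word c @ [b]"] avoid_c by simp
    qed (use Cons.prems B in auto)
    moreover have "c = canon (b + ?M) (strip c)"
    proof (rule Cons.prems(1))
      show "avoids213 (word c)" using avoids213_appendD1 avoid_c by blast
    qed (use Cons.prems(3) A in auto)
    moreover have "?M = num_internals (map strip cs)"
      by (simp add: length_concat comp_def length_labels)
    ultimately show ?thesis by simp
  qed (use Cons.prems in simp)
qed simp

lemma canon_unique:
  "incr_ltree u \<Longrightarrow> distinct (labels u) \<Longrightarrow> set (labels u) = {Suc b..b + length (labels u)} \<Longrightarrow>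
     avoids213 (word u) \<Longrightarrow> u = canon b (strip u)"
proof (induction u arbitrary: b)
  case (LNode k cs)
  have "Suc b \<in> set (labels (LNode k cs))" unfolding LNode.prems(3) by simp
  then have "k \<le> Suc b"
    using lbl_incr_hd_labels_le[of "LNode k cs" "Suc b"] LNode.prems(1) by (simp add: incr_ltree_def)
  moreover have "Suc b \<le> k" using LNode.prems(3) by auto
  ultimately have k: "k = Suc b" by simp
  have "cs = canon_forest (Suc b) (map strip cs)"
  proof (rule canon_forest_unique)
    let ?B = "set (concat (map labels cs))" and ?M = "length (concat (map labels cs))"
    have "insert (Suc b) ?B = {Suc b..Suc b + ?M}" "Suc b \<notin> ?B"
      using LNode.prems(2,3) k by (simp_all del: set_concat)
    then have "?B = {Suc b..Suc b + ?M} - {Suc b}" by blast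
    then show "?B = {Suc (Suc b)..Suc b + ?M}"
      by (simp only: atLeastSucAtMost_greaterThanAtMost greaterThanAtMost_eq_atLeastAtMost_diff)
    show "\<forall>c\<in>set cs. \<forall>l\<in>set (labels c). Suc b < l"
      using lbl_incr_child_labels_gt[of k cs] LNode.prems(1) k by (auto simp: incr_ltree_def)
    show "c = canon b' (strip c)"
      if "c \<in> set cs" "distinct (labels c)" "set (labels c) = {Suc b'..b' + length (labels c)}"
        "avoids213 (word c)" for c b'
      using LNode.IH[OF that(1)] LNode.prems(1) that by (auto simp: incr_ltree_def)
    show "\<forall>c\<in>set cs. incr_ltree c" using LNode.prems(1) by (auto simp: incr_ltree_def)
    show "distinct (concat (map labels cs))" using LNode.prems(2) by simp
    show "avoids213 (join_on (Suc b) (map word cs))"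
      using LNode.prems(4) k word_eq_join_on[of k cs] by simp
  qed
  then show ?case using k by simp
qed simp

lemma iota_eq_canon: "wf_ptree t \<Longrightarrow> \<iota> t = canon 0 t"
  unfolding \<iota>_def
proof (rule the_equality)
  assume "wf_ptree t"
  then show "gsp (canon 0 t) \<and> strip (canon 0 t) = t \<and> avoids213 (word (canon 0 t))"
    by (simp add: gsp_canon avoids213_word_canon)
next
  fix u assume "gsp u \<and> strip u = t \<and> avoids213 (word u)"
  then show "u = canon 0 t"
    using canon_unique[of u 0] by (auto simp: gsp_def incr_ltree_def)
qed


section \<open>Monotonicity of the canonical labelling\<close>

lemma wf_ptree_lrot: "lrot s t \<Longrightarrow> wf_ptree s \<Longrightarrow> wf_ptree t"
  by (induction rule: lrot.induct) auto

lemma num_internal_lrot: "lrot s t \<Longrightarrow> num_internal t = num_internal s"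
  by (induction rule: lrot.induct) auto

lemma set_swap_up_rtrancl: "swap_up\<^sup>*\<^sup>* x y \<Longrightarrow> set y = set x"
  by (induction rule: rtranclp_induct) (auto dest: set_swap_up)

lemma swap_up_rtrancl_imp_pw_le: "swap_up\<^sup>*\<^sup>* x y \<Longrightarrow> packed x \<Longrightarrow> pw_le x y"
  unfolding pw_le_def
proof (induction rule: rtranclp_induct)
  case (step y z)
  have "packed y" using step.prems set_swap_up_rtrancl[OF step.hyps(1)] by (simp add: packed_def)
  with step show ?case by (auto intro: rtranclp.rtrancl_into_rtrancl swap_up_imp_pw_cover)
qed simp

lemma swap_up_context:
  assumes "swap_up x y" "set x \<inter> (set L \<union> set R) = {}"
  shows "swap_up (L @ x @ R) (L @ y @ R)"
proof -
  obtain a P S where x: "x = P @ S" "a \<in> set P" "a \<notin> set S" "Suc a \<in> set S" "Suc a \<notin> set P"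
    and y: "y = map (swap_succ a) x"
    using assms(1) by (auto simp: swap_up_def)
  have "a \<notin> set L" "a \<notin> set R" "Suc a \<notin> set L" "Suc a \<notin> set R" using assms(2) x by auto
  then have "L @ y @ R = map (swap_succ a) ((L @ P) @ (S @ R))"
    using x(1) y by (simp add: map_swap_succ_id)
  with x show ?thesis
    unfolding swap_up_def using \<open>a \<notin> set R\<close> \<open>Suc a \<notin> set L\<close>
    by (intro exI[of _ a] exI[of _ "L @ P"] exI[of _ "S @ R"]) auto
qed

lemma swap_up_rtrancl_context:
  assumes "swap_up\<^sup>*\<^sup>* x y" "set x \<inter> (set L \<union> set R) = {}"
  shows "swap_up\<^sup>*\<^sup>* (L @ x @ R) (L @ y @ R)"
  using assms
proof (induction rule: rtranclp_induct)
  case (step y z)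
  then have "swap_up (L @ y @ R) (L @ z @ R)"
    using swap_up_context set_swap_up_rtrancl by metis
  with step show ?case by (auto intro: rtranclp.rtrancl_into_rtrancl)
qed simp

definition cycle_shift :: "nat \<Rightarrow> nat \<Rightarrow> nat \<Rightarrow> nat" where
  "cycle_shift lo n v = (if v = lo then lo + n else if lo < v \<and> v \<le> lo + n then v - 1 else v)"

lemma cycle_shift_0 [simp]: "cycle_shift lo 0 = id"
  by (simp add: fun_eq_iff cycle_shift_def)

lemma cycle_shift_above: "lo + n < v \<Longrightarrow> cycle_shift lo n v = v"
  by (simp add: cycle_shift_def)

lemma cycle_shift_Suc: "cycle_shift (Suc lo) n (swap_succ lo v) = cycle_shift lo (Suc n) v"
  by (auto simp: cycle_shift_def swap_succ_def)

text \<open>Moving the letter \<open>lo\<close> of \<open>X\<close> past the letters \<open>lo + 1, \<dots>, lo + n\<close> of \<open>Y\<close>, one adjacent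
  transposition at a time.\<close>

lemma swap_up_rtrancl_cycle_shift:
  assumes "lo \<in> set X" "\<forall>v\<in>set X. v = lo \<or> v < lo \<or> lo + n < v"
    "\<forall>v\<in>set Y. v \<noteq> lo" "{Suc lo..lo + n} \<subseteq> set Y"
  shows "swap_up\<^sup>*\<^sup>* (X @ Y) (map (cycle_shift lo n) (X @ Y))"
  using assms
proof (induction n arbitrary: lo X Y)
  case (Suc n)
  let ?X = "map (swap_succ lo) X" and ?Y = "map (swap_succ lo) Y"
  have "Suc lo \<in> set Y" "Suc lo \<notin> set X" using Suc.prems by auto
  then have "swap_up (X @ Y) (?X @ ?Y)"
    unfolding swap_up_def using Suc.prems(1,3)
    by (intro exI[of _ lo] exI[of _ X] exI[of _ Y]) auto
  moreover have "swap_up\<^sup>*\<^sup>* (?X @ ?Y) (map (cycle_shift (Suc lo) n) (?X @ ?Y))"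
  proof (rule Suc.IH)
    show "Suc lo \<in> set ?X" using Suc.prems(1) by (simp add: swap_succ_image_iff)
    show "\<forall>v\<in>set ?X. v = Suc lo \<or> v < Suc lo \<or> Suc lo + n < v"
      using Suc.prems(2) by (auto simp: swap_succ_def)
    show "\<forall>v\<in>set ?Y. v \<noteq> Suc lo" using Suc.prems(3) by (auto simp: swap_succ_def)
    show "{Suc (Suc lo)..Suc lo + n} \<subseteq> set ?Y"
      using Suc.prems(4) by (auto simp: swap_succ_image_iff subset_iff)
  qed
  moreover have "map (cycle_shift (Suc lo) n) (?X @ ?Y) = map (cycle_shift lo (Suc n)) (X @ Y)"
    by (simp add: cycle_shift_Suc)
  ultimately show ?case by (metis converse_rtranclp_into_rtranclp)
qed simp

lemma swap_up_rtrancl_rotation_words: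
  assumes "Cw \<noteq> []" "Dw \<noteq> []"
    and "\<forall>W\<in>set Cw. \<forall>v\<in>set W. Suc lo + M < v" "\<forall>v\<in>set D. Suc lo + M < v"
    and "(\<Union>W\<in>set Dw. set W) = {Suc lo..lo + M}"
  shows "swap_up\<^sup>*\<^sup>* (join_on lo Cw @ lo # D @ Suc lo # join_on (Suc lo) (map (map Suc) Dw))
                   (join_on (Suc lo + M) Cw @ (Suc lo + M) # D @ lo # join_on lo Dw)"
proof -
  let ?X = "join_on lo Cw @ [lo]" and ?Y = "D @ Suc lo # join_on (Suc lo) (map (map Suc) Dw)"
  have X: "set ?X \<subseteq> insert lo {v. Suc lo + M < v}"
    using set_join_on_subset[of lo Cw] assms(3) by auto
  have "(\<Union>W\<in>set (map (map Suc) Dw). set W) = Suc ` (\<Union>W\<in>set Dw. set W)" by auto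
  also have "\<dots> = Suc ` {Suc lo..lo + M}" by (simp only: assms(5))
  finally have Dw: "set (join_on (Suc lo) (map (map Suc) Dw)) \<subseteq> {Suc lo..Suc lo + M}"
      "{Suc (Suc lo)..Suc lo + M} \<subseteq> set (join_on (Suc lo) (map (map Suc) Dw))"
    using set_join_on_subset[of "Suc lo" "map (map Suc) Dw"] set_join_on[of "map (map Suc) Dw" "Suc lo"] assms(2)
    by (auto simp del: set_map)
  have "swap_up\<^sup>*\<^sup>* (?X @ ?Y) (map (cycle_shift lo (Suc M)) (?X @ ?Y))"
  proof (rule swap_up_rtrancl_cycle_shift)
    show "\<forall>v\<in>set ?Y. v \<noteq> lo" using assms(4) Dw by auto
    show "{Suc lo..lo + Suc M} \<subseteq> set ?Y" using Dw(2) by (auto simp: subset_iff Suc_le_eq)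
  qed (use X in auto)
  moreover have "map (map (cycle_shift lo (Suc M))) Cw = Cw"
    using assms(3) by (simp add: cycle_shift_above map_idI)
  moreover have "map (cycle_shift lo (Suc M)) D = D"
    using assms(4) by (simp add: cycle_shift_above map_idI)
  moreover have "map (map (cycle_shift lo (Suc M))) (map (map Suc) Dw) = Dw"
  proof -
    have "cycle_shift lo (Suc M) (Suc v) = v" if "W \<in> set Dw" "v \<in> set W" for W v
    proof -
      have "v \<in> {Suc lo..lo + M}" using assms(5) that by blast
      then show ?thesis by (simp add: cycle_shift_def)
    qed
    then show ?thesis by (simp add: map_idI)
  qed
  ultimately show ?thesis
    by (simp add: map_join_on cycle_shift_def)
qed

lemma word_canon_rotation_source:
  assumes "cs \<noteq> []" "ds \<noteq> []"
  shows "word (canon b (Node (cs @ [Node (d1 # ds)]))) =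
           join_on (Suc b) (map word (canon_forest (Suc (Suc (b + num_internals ds + num_internal d1))) cs))
           @ Suc b # word (canon (Suc (Suc (b + num_internals ds))) d1)
           @ Suc (Suc b) # join_on (Suc (Suc b)) (map word (canon_forest (Suc (Suc b)) ds))"
proof -
  have "map word (canon_forest (Suc (Suc (b + num_internals ds + num_internal d1))) cs) \<noteq> []"
    "map word (canon_forest (Suc (Suc b)) ds) \<noteq> []"
    using assms by (auto simp: neq_Nil_conv)
  then show ?thesis
    by (simp add: canon_forest_append word_eq_join_on join_on_snoc join_on_Cons add_ac
        del: join_on.simps(2))
qed

lemma word_canon_rotation_target:
  assumes "cs \<noteq> []" "ds \<noteq> []"
  shows "word (canon b (Node (Node (cs @ [d1]) # ds))) =
           join_on (Suc (Suc (b + num_internals ds)))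
             (map word (canon_forest (Suc (Suc (b + num_internals ds + num_internal d1))) cs))
           @ Suc (Suc (b + num_internals ds)) # word (canon (Suc (Suc (b + num_internals ds))) d1)
           @ Suc b # join_on (Suc b) (map word (canon_forest (Suc b) ds))"
proof -
  have "map word (canon_forest (Suc (Suc (b + num_internals ds + num_internal d1))) cs) \<noteq> []"
    "map word (canon_forest (Suc b) ds) \<noteq> []"
    using assms by (auto simp: neq_Nil_conv)
  then show ?thesis
    by (simp add: canon_forest_append word_eq_join_on join_on_snoc join_on_Cons add_ac
        del: join_on.simps(2))
qed

lemma swap_up_rtrancl_canon_rotation:
  assumes "cs \<noteq> []" "ds \<noteq> []" "wf_ptree (Node (cs @ [Node (d1 # ds)]))"
  shows "swap_up\<^sup>*\<^sup>* (word (canon b (Node (cs @ [Node (d1 # ds)]))))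
                    (word (canon b (Node (Node (cs @ [d1]) # ds))))"
proof -
  let ?M = "num_internals ds"
  let ?Cw = "map word (canon_forest (Suc (Suc (b + ?M + num_internal d1))) cs)"
    and ?D = "word (canon (Suc (Suc (b + ?M))) d1)" and ?Dw = "map word (canon_forest (Suc b) ds)"
  have "map word (canon_forest (Suc (Suc b)) ds) = map (map Suc) ?Dw"
    by (simp add: canon_forest_Suc word_relabel)
  moreover have "swap_up\<^sup>*\<^sup>* (join_on (Suc b) ?Cw @ Suc b # ?D @ Suc (Suc b) # join_on (Suc (Suc b)) (map (map Suc) ?Dw))
                      (join_on (Suc (Suc b) + ?M) ?Cw @ (Suc (Suc b) + ?M) # ?D @ Suc b # join_on (Suc b) ?Dw)"
  proof (rule swap_up_rtrancl_rotation_words)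
    show "?Cw \<noteq> []" "?Dw \<noteq> []" using assms(1,2) by (auto simp: neq_Nil_conv)
    show "\<forall>W\<in>set ?Cw. \<forall>v\<in>set W. Suc (Suc b) + ?M < v"
      using set_words_canon_forest_subset[of "Suc (Suc (b + ?M + num_internal d1))" cs] by fastforce
    show "\<forall>v\<in>set ?D. Suc (Suc b) + ?M < v"
      using set_word_canon_subset[of "Suc (Suc (b + ?M))" d1] by fastforce
    show "(\<Union>W\<in>set ?Dw. set W) = {Suc (Suc b)..Suc b + ?M}"
      using set_words_canon_forest[of ds "Suc b"] assms(3) by simp
  qed
  ultimately show ?thesis
    unfolding word_canon_rotation_source[OF assms(1,2)] word_canon_rotation_target[OF assms(1,2)]
    by simp
qed

lemma swap_up_rtrancl_canon_lrot:
  "lrot s t \<Longrightarrow> wf_ptree s \<Longrightarrow> swap_up\<^sup>*\<^sup>* (word (canon b s)) (word (canon b t))"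
proof (induction arbitrary: b rule: lrot.induct)
  case (root cs ds d1)
  then show ?case by (rule swap_up_rtrancl_canon_rotation)
next
  case (sub s t xs ys)
  let ?c = "Suc b + num_internals ys"
  have n: "num_internal t = num_internal s" using sub.hyps(1) by (rule num_internal_lrot)
  define As where "As = map word (canon_forest (?c + num_internal s) xs)"
  define Bs where "Bs = map word (canon_forest (Suc b) ys)"
  define L where "L = (if As = [] then [] else join_on (Suc b) As @ [Suc b])"
  define R where "R = (if Bs = [] then [] else Suc b # join_on (Suc b) Bs)"
  have word_eq: "word (canon b (Node (xs @ r # ys))) = L @ word (canon ?c r) @ R"
    if "num_internal r = num_internal s" for r
    using that by (simp add: canon_forest_append word_eq_join_on join_on_middle L_def R_def As_def Bs_def
        add_ac del: join_on.simps(2))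
  have "set L \<subseteq> insert (Suc b) {Suc (?c + num_internal s)..}"
  proof -
    have "(\<Union>W\<in>set As. set W) \<subseteq> {Suc (?c + num_internal s)..}"
      using set_words_canon_forest_subset[of "?c + num_internal s" xs] by (auto simp: As_def)
    then have "set (join_on (Suc b) As) \<subseteq> insert (Suc b) {Suc (?c + num_internal s)..}"
      using set_join_on_subset[of "Suc b" As] by blast
    then show ?thesis by (simp add: L_def)
  qed
  moreover have "set R \<subseteq> {Suc b..?c}"
  proof -
    have "(\<Union>W\<in>set Bs. set W) \<subseteq> {Suc b..?c}"
      using set_words_canon_forest_subset[of "Suc b" ys] by (auto simp: Bs_def)
    then have "set (join_on (Suc b) Bs) \<subseteq> {Suc b..?c}"
      using set_join_on_subset[of "Suc b" Bs] by force
    then show ?thesis by (simp add: R_def)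
  qed
  moreover have "set (word (canon ?c s)) \<subseteq> {Suc ?c..?c + num_internal s}"
    by (rule set_word_canon_subset)
  ultimately have "set (word (canon ?c s)) \<inter> (set L \<union> set R) = {}" by fastforce
  moreover have "swap_up\<^sup>*\<^sup>* (word (canon ?c s)) (word (canon ?c t))"
    using sub.IH sub.prems by simp
  ultimately show ?case
    unfolding word_eq[OF refl] word_eq[OF n] by (intro swap_up_rtrancl_context)
qed

lemma pt_le_imp_pw_le_canon:
  assumes "pt_le s t" "wf_ptree s"
  shows "pw_le (word (canon 0 s)) (word (canon 0 t))"
proof -
  have "swap_up\<^sup>*\<^sup>* (word (canon 0 s)) (word (canon 0 t)) \<and> wf_ptree t"
    using assms(1) unfolding pt_le_def
  proof (induction rule: rtranclp_induct)
    case (step t t')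
    then show ?case using swap_up_rtrancl_canon_lrot wf_ptree_lrot by (meson rtranclp_trans)
  qed (simp add: assms(2))
  moreover have "packed (word (canon 0 s))"
    using set_word_canon[OF assms(2), of 0] by (intro packed_interval[of _ "num_internal s"]) simp
  ultimately show ?thesis by (blast intro: swap_up_rtrancl_imp_pw_le)
qed


section \<open>Every GSP lies below the canonical labelling of its tree\<close>

definition stirling_word :: "nat list \<Rightarrow> bool" where
  "stirling_word x \<longleftrightarrow> (\<forall>i j l. i < j \<and> j < l \<and> l < length x \<and> x ! i = x ! l \<longrightarrow> x ! i \<le> x ! j)"

lemma stirling_word_append_Cons:
  assumes "stirling_word A" "stirling_word B" "set A \<inter> set B = {}" "\<forall>a\<in>set A. k < a" "\<forall>v\<in>set B. k \<le> v"
  shows "stirling_word (A @ k # B)"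
  unfolding stirling_word_def
proof (intro allI impI, elim conjE)
  fix i j l assume ij: "i < j" "j < l" "l < length (A @ k # B)" and eq: "(A @ k # B) ! i = (A @ k # B) ! l"
  let ?x = "A @ k # B"
  let ?n = "length A"
  consider "l < ?n" | "?n < i" | "i < ?n" "?n < l" | "i = ?n" | "l = ?n" by linarith
  then show "?x ! i \<le> ?x ! j"
  proof cases
    case 1
    then show ?thesis using assms(1) ij eq unfolding stirling_word_def by (auto simp: nth_append)
  next
    case 2
    have "B ! (i - Suc ?n) \<le> B ! (j - Suc ?n)"
      using assms(2) unfolding stirling_word_def
      by (rule allE[of _ "i - Suc ?n"], elim allE[of _ "j - Suc ?n"] allE[of _ "l - Suc ?n"])
         (use 2 ij eq in \<open>auto simp: nth_append nth_Cons'\<close>)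
    then show ?thesis using 2 ij by (auto simp: nth_append nth_Cons')
  next
    case 3
    have "?x ! i \<in> set A" using 3 by (simp add: nth_append)
    moreover have "?x ! l \<in> set B" using 3 ij by (auto simp: nth_append nth_Cons')
    ultimately show ?thesis using eq assms(3) by auto
  next
    case 4
    then have "?x ! i = k" by (simp add: nth_append)
    moreover have "?x ! j \<in> set B" using 4 ij by (auto simp: nth_append nth_Cons')
    ultimately show ?thesis using assms(5) by auto
  next
    case 5
    then have "?x ! l = k" by (simp add: nth_append)
    moreover have "?x ! i \<in> set A" using 5 ij by (simp add: nth_append)
    ultimately show ?thesis using eq assms(4) by auto
  qed
qed

lemma stirling_word_join_on:
  "(\<forall>c\<in>set cs. stirling_word (word c)) \<Longrightarrow> distinct (concat (map labels cs)) \<Longrightarrow>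
   (\<forall>c\<in>set cs. \<forall>l\<in>set (labels c). k < l) \<Longrightarrow> stirling_word (join_on k (map word cs))"
proof (induction cs)
  case Nil then show ?case by (simp add: stirling_word_def)
next
  case (Cons c cs')
  show ?case
  proof (cases "cs' = []")
    case True then show ?thesis using Cons(2) by simp
  next
    case False
    have ne: "map word cs' \<noteq> []" using False by simp
    have jeq: "join_on k (map word (c # cs')) = word c @ k # join_on k (map word cs')"
      using join_on_Cons[OF ne] by simp
    have IH: "stirling_word (join_on k (map word cs'))" using Cons by simp
    have s1: "set (word c) \<subseteq> set (labels c)" by (rule set_word_subset_labels)
    have s2: "set (join_on k (map word cs')) \<subseteq> insert k (\<Union>c'\<in>set cs'. set (labels c'))"
      using set_join_on_subset[of k "map word cs'"] set_word_subset_labels by fastforce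
    have d: "set (labels c) \<inter> (\<Union>c'\<in>set cs'. set (labels c')) = {}" using Cons(3) by simp
    have kc: "k \<notin> set (labels c)" using Cons(4) by auto
    show ?thesis unfolding jeq
    proof (rule stirling_word_append_Cons)
      show "stirling_word (word c)" using Cons(2) by simp
      show "stirling_word (join_on k (map word cs'))" by (rule IH)
      show "set (word c) \<inter> set (join_on k (map word cs')) = {}" using s1 s2 d kc by blast
      show "\<forall>a\<in>set (word c). k < a" using s1 Cons(4) by auto
      show "\<forall>v\<in>set (join_on k (map word cs')). k \<le> v" using s2 Cons(4) by (fastforce simp: less_imp_le)
    qed
  qed
qed

lemma stirling_word_word: "lbl_incr u \<Longrightarrow> distinct (labels u) \<Longrightarrow> stirling_word (word u)"
proof (induction u)
  case LLeaf then show ?case by (simp add: stirling_word_def)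
next
  case (LNode k cs)
  have "stirling_word (join_on k (map word cs))"
  proof (rule stirling_word_join_on)
    show "\<forall>c\<in>set cs. stirling_word (word c)" using LNode
      by (auto simp: distinct_concat_iff)
    show "distinct (concat (map labels cs))" using LNode(3) by simp
    show "\<forall>c\<in>set cs. \<forall>l\<in>set (labels c). k < l" using lbl_incr_child_labels_gt LNode(2) by blast
  qed
  then show ?case by (simp add: word_eq_join_on)
qed

text \<open>If the middle value \<open>x ! i + 1\<close> of a 213-pattern is not its last letter, it occurs (by
  packedness) either after position \<open>j\<close>, giving the pattern directly, or before \<open>j\<close>, giving a pattern
  with a smaller gap.\<close>

lemma packed_213_adjacent:
  assumes "packed x" "i < j" "j < l" "l < length x" "x ! j < x ! i" "x ! i < x ! l"
  obtains i j l where "i < j" "j < l" "l < length x" "x ! j < x ! i" "x ! l = Suc (x ! i)"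
  using assms(2-)
proof (induction "x ! l - x ! i" arbitrary: i j l rule: less_induct)
  case less
  show ?case
  proof (cases "x ! l = Suc (x ! i)")
    case False
    let ?r = "Suc (x ! i)"
    have "x ! l \<le> Max (insert 0 (set x))" using less.prems(4) by simp
    then have "?r \<in> {1..Max (insert 0 (set x))}" using False less.prems(6) by simp
    then obtain p where p: "p < length x" "x ! p = ?r"
      using assms(1) by (metis in_set_conv_nth packed_def)
    show ?thesis
    proof (cases "j < p")
      case True
      then show ?thesis using less.prems p by blast
    next
      case False
      moreover have "p \<noteq> j" using p less.prems(5) by auto
      ultimately show ?thesis
        using less.hyps[of l p j] less.prems p False by fastforce
    qed
  qed (use less.prems in blast)
qed

lemma stirling_word_213_swap:
  assumes "packed x" "stirling_word x" "\<not> avoids213 x"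
  obtains a P e S where "x = P @ e # S" "e < a" "a \<in> set P" "a \<notin> set S" "Suc a \<in> set S" "Suc a \<notin> set P"
proof -
  obtain i j l where p: "i < j" "j < l" "l < length x" "x ! j < x ! i" "x ! i < x ! l"
    using assms(3) unfolding avoids213_def by blast
  then obtain i j l where q: "i < j" "j < l" "l < length x" "x ! j < x ! i" "x ! l = Suc (x ! i)"
    using packed_213_adjacent[OF assms(1)] by blast
  let ?P = "take j x" and ?S = "drop (Suc j) x"
  have "x = ?P @ x ! j # ?S" using q by (simp add: id_take_nth_drop)
  moreover have "x ! i \<in> set ?P" using q by (auto simp: in_set_conv_nth intro!: exI[of _ i])
  moreover have "Suc (x ! i) \<in> set ?S" using q
    by (auto simp: in_set_conv_nth intro!: exI[of _ "l - Suc j"])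
  moreover have "x ! i \<notin> set ?S"
  proof
    assume "x ! i \<in> set ?S"
    then obtain p where "x ! (Suc j + p) = x ! i" "Suc j + p < length x" by (auto simp: in_set_conv_nth)
    moreover have "j < Suc j + p" by simp
    ultimately have "x ! i \<le> x ! j" using assms(2) q(1) unfolding stirling_word_def by metis
    then show False using q(4) by simp
  qed
  moreover have "Suc (x ! i) \<notin> set ?P"
  proof
    assume "Suc (x ! i) \<in> set ?P"
    then obtain p where "x ! p = x ! l" "p < j" using q(5) by (auto simp: in_set_conv_nth)
    then have "x ! p \<le> x ! j" using assms(2) q(2,3) unfolding stirling_word_def by blast
    then show False using q(4,5) \<open>x ! p = x ! l\<close> by simp
  qed
  ultimately show ?thesis using that q(4) by blast
qed

lemma packed_word_gsp: "gsp u \<Longrightarrow> packed (word u)"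
  by (intro packed_interval[of _ "length (labels u)"]) (simp add: gsp_def set_word_eq_labels)

lemma gsp_relabel_swap_succ:
  assumes "gsp u" "word u = P @ e # S" "e < a" "a \<notin> set S" "Suc a \<notin> set P"
    and "a \<in> set (word u)" "Suc a \<in> set (word u)"
  shows "gsp (relabel (swap_succ a) u)"
proof -
  have incr: "incr_ltree u" and labels: "set (labels u) = set (word u)"
    using assms(1) set_word_eq_labels by (auto simp: gsp_def incr_ltree_def)
  have "relabel (swap_succ a) u = ltree_of_word (map (swap_succ a) (word u))"
    using ltree_of_word_swap_succ_separated[OF assms(3-5)] assms(2) ltree_of_word_word[OF incr] by simp
  then have "lbl_incr (relabel (swap_succ a) u)"
    using incr_ltree_of_word by (simp add: incr_ltree_def)
  moreover have "set (labels (relabel (swap_succ a) u)) = set (labels u)"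
    using set_map_swap_succ[OF assms(6,7)] labels by (simp add: labels_relabel)
  moreover have "distinct (labels (relabel (swap_succ a) u))"
    using assms(1) by (simp add: gsp_def labels_relabel distinct_map inj_on_def swap_succ_eq_iff)
  ultimately show ?thesis
    using assms(1) by (simp add: gsp_def labels_relabel)
qed

text \<open>Induction on the number of non-inversions: as long as the word of \<open>u\<close> contains a 213-pattern,
  a cover of the planar weak order relabels \<open>u\<close> without changing its tree.\<close>

lemma pw_le_word_canon: "gsp u \<Longrightarrow> pw_le (word u) (word (canon 0 (strip u)))"
proof (induction "card (set (word u) \<times> set (word u)) - card (iInv (word u))" arbitrary: u
    rule: less_induct)
  case less
  let ?x = "word u"
  show ?case
  proof (cases "avoids213 ?x")
    case True
    then have "u = canon 0 (strip u)"
      using less.prems canon_unique[of u 0] by (auto simp: gsp_def incr_ltree_def)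
    then show ?thesis by (simp add: pw_le_def)
  next
    case False
    have packed: "packed ?x" using less.prems by (rule packed_word_gsp)
    moreover have "stirling_word ?x"
      using less.prems by (simp add: gsp_def stirling_word_word)
    ultimately obtain a P e S where split: "?x = P @ e # S" "e < a" "a \<in> set P" "a \<notin> set S"
      "Suc a \<in> set S" "Suc a \<notin> set P"
      using False by (rule stirling_word_213_swap)
    let ?u = "relabel (swap_succ a) u"
    have word: "word ?u = map (swap_succ a) ?x" by (simp add: word_relabel)
    have "swap_up ?x (word ?u)"
      unfolding swap_up_def word using split by (intro exI[of _ a] exI[of _ "P @ [e]"] exI[of _ S]) auto
    then have cover: "pw_cover ?x (word ?u)" using packed by (rule swap_up_imp_pw_cover)
    have "card (iInv (word ?u)) = Suc (card (iInv ?x))" using cover by (auto simp: pw_cover_def)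
    moreover have "set (word ?u) = set ?x" using \<open>swap_up ?x (word ?u)\<close> by (rule set_swap_up)
    moreover have "card (iInv (word ?u)) \<le> card (set (word ?u) \<times> set (word ?u))"
      by (intro card_mono) (simp_all add: iInv_subset)
    ultimately have "card (set (word ?u) \<times> set (word ?u)) - card (iInv (word ?u))
                     < card (set ?x \<times> set ?x) - card (iInv ?x)"
      by simp
    moreover have "a \<in> set ?x" "Suc a \<in> set ?x" using split(1,3,5) by simp_all
    then have "gsp ?u" using gsp_relabel_swap_succ[OF less.prems split(1,2,4,6)] by blast
    ultimately have "pw_le (word ?u) (word (canon 0 (strip ?u)))" by (rule less.hyps)
    with cover show ?thesis by (simp add: pw_le_def converse_rtranclp_into_rtranclp)
  qed
qed

theorem mainTheorem9:
  fixes n :: nat and u :: ltree and t :: ptree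
  assumes "gsp u" and "pdeg (\<pi> u) = n"
    and "wf_ptree t" and "pdeg t = n"
  shows "pt_le (\<pi> u) t \<longleftrightarrow> gsp_le u (\<iota> t)"
proof
  assume "pt_le (\<pi> u) t"
  then have "pw_le (word (canon 0 (\<pi> u))) (word (canon 0 t))"
    using assms(1) by (intro pt_le_imp_pw_le_canon) (simp_all add: gsp_def)
  then show "gsp_le u (\<iota> t)"
    using pw_le_word_canon[OF assms(1)] iota_eq_canon[OF assms(3)]
    by (simp add: gsp_le_def pw_le_def)
next
  assume "gsp_le u (\<iota> t)"
  then have "pt_le (ptree_of_word (word u)) (ptree_of_word (word (canon 0 t)))"
    using iota_eq_canon[OF assms(3)] by (simp add: gsp_le_def pw_le_imp_pt_le)
  moreover have "ptree_of_word (word u) = \<pi> u"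
    using assms(1) by (simp add: ptree_of_word_def ltree_of_word_word gsp_def incr_ltree_def)
  moreover have "ptree_of_word (word (canon 0 t)) = t"
    using assms(3) by (simp add: ptree_of_word_def ltree_of_word_word incr_ltree_canon)
  ultimately show "pt_le (\<pi> u) t" by simp
qed

end
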